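(* Suppose AS.1 and AS.2 hold. Consider a recursive iteration $(\ell,i)$ of the MOFFTR algorithm described in the context, and suppose that $i_{\ell-1}\ge1$ iterations of the algorithm have been completed at level $\ell-1$ (iterates $x_{\ell-1,k}$, gradients $g_{\ell-1,k}=\nabla h_{\ell-1}(x_{\ell-1,k})$, steps $s_{\ell-1,k}$). Then, with $\delta_{\ell-1}=\alpha\|\Delta_{\ell,i}\|$, \[ \Big|g_{\ell,i}^Ts_{\ell,i}-\frac1\omega\sum_{k=0}^{i_{\ell-1}-1}g_{\ell-1,k}^Ts_{\ell-1,k}\Big|\le\frac{2\,i^{\max}_{\ell-1}\,L\,\delta_{\ell-1}^2}{\omega\,\sigma_{\min}[P_\ell]^2}. \]
   Context: Notation: $\|\cdot\|$ is the Euclidean norm (spectral norm for matrices); $|x|$ is the componentwise absolute value; $\sigma_{\min}[M]$ is the smallest singular value of $M$; for a positive vector $w$, $D(w)=\mathrm{diag}(1/w_1,\dots,1/w_m)$. Setting: $r\ge1$ levels; functions $f_\ell:\mathbb{R}^{n_\ell}\to\mathbb{R}$, $n_r=n$, $f_r=f$; for $\ell\ge2$ full-rank linear $R_\ell:\mathbb{R}^{n_\ell}\to\mathbb{R}^{n_{\ell-1}}$, $P_\ell:\mathbb{R}^{n_{\ell-1}}\to\mathbb{R}^{n_\ell}$ with $\omega P_\ell=R_\ell^T$, $\omega>0$. AS.1: each $f_\ell$ is continuously differentiable. AS.2: each $\nabla f_\ell$ is Lipschitz with constant $L\ge0$. Algorithm MOFFTR$(\ell,h_\ell,x_{\ell,0},\epsilon_\ell,i^{\max}_\ell,\delta_\ell,w_{\ell,0})$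 with constants $\kappa_R\in(0,1)$, $\alpha\ge1$, $\tau\in(0,1]$, $\kappa_B\ge1$, $\varsigma_j\in(0,1]$; $i=0$. Step 1: if $\ell<r$ and $\|P_{\ell+1}(x_{\ell,i}-x_{\ell,0})\|>\delta_\ell$, return $x_{\ell,i-1}$. Else $g_{\ell,i}=\nabla h_\ell(x_{\ell,i})$; if $\|g_{\ell,i}\|\le\epsilon_\ell$ or $i=i^{\max}_\ell$, return $x_{\ell,i}$. Step 2: $\widehat\Delta_{\ell,i}=D(w_{\ell,i})|g_{\ell,i}|$; $\Delta_{\ell,i}=\widehat\Delta_{\ell,i}$ if $\ell=r$, else $\Delta_{\ell,i}=\min[2\delta_\ell/(\|P_{\ell+1}\|\|\widehat\Delta_{\ell,i}\|),1]\widehat\Delta_{\ell,i}$. For $i>0$ choose $w_{\ell,i}$ with $w_{\ell,i,j}\ge\varsigma_j$. If a Taylor step is chosen, go to Step 4. Step 3: choose $w_{\ell-1,0}$ with $w_{\ell-1,0,j}\ge\varsigma_j$, a variant-dependent "lower-level weights large enough" condition, and $\|D(w_{\ell-1,0})|R_\ell g_{\ell,i}|\|\le\alpha\|\Delta_{\ell,i}\|/\|P_\ell\|$. If $\ell=1$ or $\sum_j[R_\ell g_{\ell,i}]_j^2/w_{\ell-1,0,j}<\kappa_R\sum_j g_{\ell,i,j}^2/w_{\ell,i,j}$, go to Step 4. Otherwise (recursive iteration) $s_{\ell,i}=P_\ell[\mathrm{MOFFTR}(\ell-1,h_{\ell-1},R_\ell x_{\ell,i},\epsilon_{\ell-1},i^{\max}_{\ell-1},\alpha\|\Delta_{\ell,i}\|,w_{\ell-1,0})-R_\ell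 x_{\ell,i}]$ with $h_{\ell-1}(x_{\ell-1,0}+s)=f_{\ell-1}(x_{\ell-1,0}+s)+(R_\ell g_{\ell,i}-\nabla f_{\ell-1}(x_{\ell-1,0}))^Ts$, $x_{\ell-1,0}=R_\ell x_{\ell,i}$; go to Step 5. Step 4 (Taylor iteration): symmetric $B$ with $\|B\|\le\kappa_B$; step $s$ with $|s_j|\le\Delta_{\ell,i,j}$ and $g^Ts+\frac12s^TBs\le\tau(g^Ts^Q+\frac12(s^Q)^TBs^Q)$, $s^L_j=-\mathrm{sign}(g_j)\Delta_{\ell,i,j}$, $s^Q=\gamma s^L$, $\gamma=\min[1,|g^Ts^L|/((s^L)^TBs^L)]$ if $(s^L)^TBs^L>0$, else $\gamma=1$. Step 5: $x_{\ell,i+1}=x_{\ell,i}+s_{\ell,i}$, $i\leftarrow i+1$, go to Step 1. Top-level call MOFFTR$(r,f,x_{r,0},\epsilon_r,i^{\max}_r,+\infty,w_{r,0})$, $h_r=f$. *)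

theory Defs
  imports "HOL-Analysis.Analysis"
begin

text \<open>Smallest singular value of a (rectangular) real matrix A with k columns and
  m rows: the singular values are the square roots of the eigenvalues of the
  Gram matrix of size min(m,k), i.e. of A^T A if k \<le> m, otherwise of A A^T.\<close>
definition sigma_min :: "real^'k^'m \<Rightarrow> real" where
  "sigma_min A =
     (if CARD('k) \<le> CARD('m)
      then sqrt (Inf {lam. \<exists>v. v \<noteq> 0 \<and> (transpose A ** A) *v v = lam *\<^sub>R v})
      else sqrt (Inf {lam. \<exists>v. v \<noteq> 0 \<and> (A ** transpose A) *v v = lam *\<^sub>R v}))"

end

theory Submission
  imports Defs
begin

text \<open>Since \<omega> P = R^T, g^T s_l equals (1/\<omega>) (R g)^T (x_il - x_0),
  and R g is the gradient of the lower-level model at x_0. Telescoping the lower steps turns the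
  difference to be bounded into (1/\<omega>) \<Sum>_k (g_0 - g_k)^T s_k; the first-order correction in
  h_(l-1) has constant gradient, so g_0 - g_k is a difference of gradients of f_(l-1), which is
  at most L |x_k - x_0|. Both |x_k - x_0| and |s_k|/2 are at most \<delta>/\<sigma>_min(P), because
  |P (x_k - x_0)| \<le> \<delta> and |P v| \<ge> \<sigma>_min(P) |v|; the latter holds because \<sigma>_min(P)^2, the least
  eigenvalue of P^T P, is the minimum of |P v|^2 over the unit sphere.\<close>

lemma matrix_gram_inner:
  fixes P :: "real^'m^'n"
  shows "((transpose P ** P) *v u) \<bullet> w = (P *v u) \<bullet> (P *v w)"
proof -
  have "(transpose P ** P) *v u = transpose P *v (P *v u)"
    by (simp add: matrix_vector_mul_assoc)
  also have "\<dots> = (P *v u) v* P"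
    by simp
  finally show ?thesis
    by (simp add: dot_lmul_matrix)
qed

lemma norm_add_scaleR_power2:
  fixes a b :: "'a::real_inner"
  shows "norm (a + t *\<^sub>R b)^2 = norm a^2 + 2 * t * (a \<bullet> b) + t^2 * norm b^2"
  unfolding power2_norm_eq_inner
  by (simp add: inner_add_left inner_add_right inner_commute algebra_simps power2_eq_square)

lemma injective_matrix_attains_min_on_sphere:
  fixes P :: "real^'m^'n"
  assumes "inj ((*v) P)"
  obtains u where "norm u = 1" "norm (P *v u)^2 > 0"
    "\<And>v. norm (P *v u)^2 * norm v^2 \<le> norm (P *v v)^2"
proof -
  define f where "f = (\<lambda>v::real^'m. norm (P *v v)^2)"
  have "continuous_on (sphere 0 1) f"
    unfolding f_def by (intro continuous_intros)
  moreover have "sphere (0::real^'m) 1 \<noteq> {}"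
    using norm_axis_1 by (metis dist_0_norm mem_sphere empty_iff)
  ultimately obtain u where u: "norm u = 1" and umin: "\<And>w. norm w = 1 \<Longrightarrow> f u \<le> f w"
    using continuous_attains_inf[OF compact_sphere] by (metis mem_sphere_0)
  have "P *v u \<noteq> P *v 0"
    using u injD[OF assms] by fastforce
  then have "f u > 0"
    by (simp add: f_def)
  moreover have "f u * norm v^2 \<le> f v" for v
  proof (cases "v = 0")
    case False
    then have "f u \<le> f ((1 / norm v) *\<^sub>R v)"
      by (intro umin) simp
    also have "\<dots> = f v / norm v^2"
      by (simp add: f_def matrix_vector_mult_scaleR power_divide)
    finally show ?thesis
      using False by (simp add: field_simps)
  qed (simp add: f_def)
  ultimately show thesis
    using that u by (simp add: f_def)
qed

text \<open>First-order optimality: moving the minimiser u along z = P^T P u - \<mu> u changes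
  |P v|^2 - \<mu> |v|^2 from 0 to 2 t |z|^2 + O(t^2), which is negative for small t < 0
  unless z = 0.\<close>
lemma sphere_minimizer_is_gram_eigenvector:
  fixes P :: "real^'m^'n"
  assumes u: "norm u = 1" and \<mu>: "\<mu> = norm (P *v u)^2"
    and min: "\<And>v. \<mu> * norm v^2 \<le> norm (P *v v)^2"
  shows "(transpose P ** P) *v u = \<mu> *\<^sub>R u"
proof -
  define z where "z = (transpose P ** P) *v u - \<mu> *\<^sub>R u"
  define a where "a = z \<bullet> z"
  define c where "c = norm (P *v z)^2 - \<mu> * norm z^2"
  have expand:
    "norm (P *v (u + t *\<^sub>R z))^2 - \<mu> * norm (u + t *\<^sub>R z)^2 = 2 * t * a + t^2 * c" for t
  proof -
    have cross: "(P *v u) \<bullet> (P *v z) = a + \<mu> * (u \<bullet> z)"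
      by (simp add: a_def z_def matrix_gram_inner[symmetric] inner_diff_left)
    have "norm (P *v (u + t *\<^sub>R z))^2
        = \<mu> + 2 * t * ((P *v u) \<bullet> (P *v z)) + t^2 * norm (P *v z)^2"
      by (simp add: \<mu> matrix_vector_right_distrib matrix_vector_mult_scaleR norm_add_scaleR_power2)
    moreover have "norm (u + t *\<^sub>R z)^2 = 1 + 2 * t * (u \<bullet> z) + t^2 * norm z^2"
      using u by (simp add: norm_add_scaleR_power2)
    ultimately show ?thesis
      unfolding cross c_def by (simp add: algebra_simps)
  qed
  have c: "c \<ge> 0"
    using min[of z] by (simp add: c_def)
  have "a \<le> 0"
  proof (rule ccontr)
    assume "\<not> a \<le> 0"
    define t where "t = - a / (c + 1)"
    have nonneg: "0 \<le> 2 * t * a + t^2 * c"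
      using expand[of t] min[of "u + t *\<^sub>R z"] by simp
    have "t * (c + 1) = - a"
      using c by (simp add: t_def)
    have "(c + 1)^2 * (2 * t * a + t^2 * c) = 2 * a * (t * (c + 1)) * (c + 1) + (t * (c + 1))^2 * c"
      by (simp add: algebra_simps power2_eq_square)
    also have "\<dots> = - (a^2 * (c + 2))"
      unfolding \<open>t * (c + 1) = - a\<close> by (simp add: algebra_simps power2_eq_square)
    also have "\<dots> < 0"
      using \<open>\<not> a \<le> 0\<close> c by simp
    finally have "(c + 1)^2 * (2 * t * a + t^2 * c) < 0" .
    then show False
      using nonneg c by (simp add: mult_less_0_iff)
  qed
  then have "z = 0"
    unfolding a_def by (metis inner_eq_zero_iff inner_ge_zero order_antisym)
  then show ?thesis
    by (simp add: z_def)
qed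

lemma gram_eigenvalue_mult_norm:
  fixes P :: "real^'m^'n"
  assumes "(transpose P ** P) *v v = lam *\<^sub>R v"
  shows "lam * norm v^2 = norm (P *v v)^2"
proof -
  have "lam * norm v^2 = ((transpose P ** P) *v v) \<bullet> v"
    using assms by (simp add: power2_norm_eq_inner)
  also have "\<dots> = norm (P *v v)^2"
    by (simp add: matrix_gram_inner power2_norm_eq_inner)
  finally show ?thesis .
qed

lemma sigma_min_injective_bounds:
  fixes P :: "real^'m^'n"
  assumes "CARD('m) \<le> CARD('n)" and "inj ((*v) P)"
  shows "sigma_min P > 0" and "sigma_min P * norm v \<le> norm (P *v v)"
proof -
  obtain u where u: "norm u = 1" "norm (P *v u)^2 > 0"
    and min: "\<And>v. norm (P *v u)^2 * norm v^2 \<le> norm (P *v v)^2"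
    using injective_matrix_attains_min_on_sphere[OF assms(2)] by blast
  define \<mu> where "\<mu> = norm (P *v u)^2"
  define E where "E = {lam. \<exists>v. v \<noteq> 0 \<and> (transpose P ** P) *v v = lam *\<^sub>R v}"
  have "(transpose P ** P) *v u = \<mu> *\<^sub>R u"
    using sphere_minimizer_is_gram_eigenvector[OF u(1) \<mu>_def] min by (simp add: \<mu>_def)
  moreover have "u \<noteq> 0"
    using u(1) by auto
  ultimately have "\<mu> \<in> E"
    unfolding E_def by blast
  moreover have "\<mu> \<le> lam" if lam: "lam \<in> E" for lam
  proof -
    obtain v where v: "v \<noteq> 0" "(transpose P ** P) *v v = lam *\<^sub>R v"
      using lam unfolding E_def by blast
    have "\<mu> * norm v^2 \<le> lam * norm v^2"
      using min[of v] gram_eigenvalue_mult_norm[OF v(2)] by (simp add: \<mu>_def)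
    then show ?thesis
      using v(1) by simp
  qed
  ultimately have sigma: "sigma_min P = sqrt \<mu>"
    using assms(1) cInf_eq_minimum[of \<mu> E] by (simp add: sigma_min_def E_def)
  show "sigma_min P > 0"
    using u(2) by (simp add: sigma \<mu>_def)
  have "sqrt (\<mu> * norm v^2) \<le> sqrt (norm (P *v v)^2)"
    using min[of v] by (simp only: \<mu>_def real_sqrt_le_iff)
  then show "sigma_min P * norm v \<le> norm (P *v v)"
    by (simp add: sigma real_sqrt_mult)
qed

lemma gradient_unique:
  fixes f :: "'a::real_inner \<Rightarrow> real"
  assumes "(f has_derivative (\<lambda>v. a \<bullet> v)) (at x)" and "(f has_derivative (\<lambda>v. b \<bullet> v)) (at x)"
  shows "a = b"
proof -
  have "(\<lambda>v. a \<bullet> v) = (\<lambda>v. b \<bullet> v)"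
    using has_derivative_unique[OF assms] .
  then have "a \<bullet> (a - b) = b \<bullet> (a - b)"
    by metis
  then have "(a - b) \<bullet> (a - b) = 0"
    by (simp add: inner_diff_left)
  then show ?thesis
    by simp
qed

lemma gradient_add_inner_const:
  fixes f :: "'a::real_inner \<Rightarrow> real"
  assumes "\<And>y. (f has_derivative (\<lambda>v. grad y \<bullet> v)) (at y)"
    and "((\<lambda>y. f y + c \<bullet> (y - z)) has_derivative (\<lambda>v. g \<bullet> v)) (at x)"
  shows "g = grad x + c"
proof -
  have "((\<lambda>y. f y + c \<bullet> (y - z)) has_derivative (\<lambda>v. (grad x + c) \<bullet> v)) (at x)"
    unfolding inner_add_left
  proof (intro has_derivative_add assms(1) has_derivative_inner_right)
    show "((\<lambda>y. y - z) has_derivative (\<lambda>v. v)) (at x)"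
      using has_derivative_diff[OF has_derivative_ident has_derivative_const] by simp
  qed
  then show ?thesis
    using gradient_unique[OF assms(2)] by blast
qed

lemma matrix_vector_mult_scaled_transpose:
  fixes P :: "real^'m^'n" and R :: "real^'n^'m"
  assumes "\<omega> \<noteq> 0" and "\<omega> *\<^sub>R P = transpose R"
  shows "P *v v = (1 / \<omega>) *\<^sub>R (v v* R)"
proof -
  have "P = (1 / \<omega>) *\<^sub>R transpose R"
    using assms by (simp flip: assms(2))
  then show ?thesis
    by (simp add: scaleR_matrix_vector_assoc[symmetric])
qed

lemma inner_scaled_transpose:
  fixes P :: "real^'m^'n" and R :: "real^'n^'m"
  assumes "\<omega> \<noteq> 0" and "\<omega> *\<^sub>R P = transpose R"
  shows "g \<bullet> (P *v d) = ((R *v g) \<bullet> d) / \<omega>"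
  using dot_lmul_matrix[of d R g]
  by (simp add: matrix_vector_mult_scaled_transpose[OF assms] inner_commute)

lemma scaled_transpose_injective:
  fixes P :: "real^'m^'n" and R :: "real^'n^'m"
  assumes "\<omega> \<noteq> 0" and "\<omega> *\<^sub>R P = transpose R" and "rank R = CARD('m)"
  shows "inj ((*v) P)"
proof -
  have "inj ((*v) (transpose R))"
    using assms(3) by (simp add: rank_transpose flip: full_rank_injective)
  then show ?thesis
    using assms(1) by (simp add: inj_on_def matrix_vector_mult_scaled_transpose[OF assms(1,2)])
qed

lemma sum_inner_gradient_drift_bound:
  fixes grad :: "'a::real_inner \<Rightarrow> 'a" and x :: "nat \<Rightarrow> 'a"
  assumes lip: "\<And>y z. norm (grad y - grad z) \<le> L * norm (y - z)" and "L \<ge> 0"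
    and ball: "\<And>k. k \<le> n \<Longrightarrow> norm (x k - x 0) \<le> r"
  shows "\<bar>\<Sum>k<n. (grad (x 0) - grad (x k)) \<bullet> (x (Suc k) - x k)\<bar> \<le> real n * (2 * L * r^2)"
proof -
  have "r \<ge> 0"
    using ball[of 0] by simp
  have "\<bar>(grad (x 0) - grad (x k)) \<bullet> (x (Suc k) - x k)\<bar> \<le> 2 * L * r^2" if "k < n" for k
  proof -
    have step: "norm (x (Suc k) - x k) \<le> 2 * r"
      using norm_triangle_ineq4[of "x (Suc k) - x 0" "x k - x 0"] ball[of k] ball[of "Suc k"] that
      by simp
    have "norm (grad (x 0) - grad (x k)) \<le> L * norm (x k - x 0)"
      using lip[of "x 0" "x k"] by (simp add: norm_minus_commute)
    also have "\<dots> \<le> L * r"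
      using ball[of k] that \<open>L \<ge> 0\<close> by (simp add: mult_left_mono)
    finally have drift: "norm (grad (x 0) - grad (x k)) \<le> L * r" .
    have "\<bar>(grad (x 0) - grad (x k)) \<bullet> (x (Suc k) - x k)\<bar>
        \<le> norm (grad (x 0) - grad (x k)) * norm (x (Suc k) - x k)"
      by (rule Cauchy_Schwarz_ineq2)
    also have "\<dots> \<le> (L * r) * (2 * r)"
      using step drift \<open>L \<ge> 0\<close> \<open>r \<ge> 0\<close> by (intro mult_mono) auto
    finally show ?thesis
      by (simp add: power2_eq_square)
  qed
  then have "(\<Sum>k<n. \<bar>(grad (x 0) - grad (x k)) \<bullet> (x (Suc k) - x k)\<bar>) \<le> real n * (2 * L * r^2)"
    using sum_mono[of "{..<n}" _ "\<lambda>_. 2 * L * r^2"] by simp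
  then show ?thesis
    by (rule order_trans[OF sum_abs])
qed

lemma inner_telescope_diff:
  fixes x s b :: "nat \<Rightarrow> 'a::real_inner"
  assumes "\<And>k. k < n \<Longrightarrow> x (Suc k) = x k + s k"
  shows "a \<bullet> (x n - x 0) - (\<Sum>k<n. b k \<bullet> s k) = (\<Sum>k<n. (a - b k) \<bullet> (x (Suc k) - x k))"
proof -
  have "(\<Sum>k<n. b k \<bullet> s k) = (\<Sum>k<n. b k \<bullet> (x (Suc k) - x k))"
    using assms by (intro sum.cong) auto
  moreover have "a \<bullet> (x n - x 0) = (\<Sum>k<n. a \<bullet> (x (Suc k) - x k))"
    by (simp only: sum_lessThan_telescope[symmetric] inner_sum_right)
  ultimately show ?thesis
    by (simp add: inner_diff_left sum_subtractf)
qed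

theorem lemma3p4:
  fixes fm :: "real^'m \<Rightarrow> real" and gradfm :: "real^'m \<Rightarrow> real^'m"
    and fl :: "real^'n \<Rightarrow> real" and gradfl :: "real^'n \<Rightarrow> real^'n"
    and hl :: "real^'n \<Rightarrow> real"
    and L \<omega> \<alpha> eps :: real
    and P :: "real^'m^'n" and R :: "real^'n^'m"
    and xl g sl Dl :: "real^'n"
    and x s gm :: "nat \<Rightarrow> real^'m"
    and il imax :: nat
  assumes
    \<comment> \<open>AS.1 and AS.2 for the functions at levels l and l-1\<close>
    AS1m: "\<And>y. (fm has_derivative (\<lambda>v. gradfm y \<bullet> v)) (at y)" "continuous_on UNIV gradfm"
    and AS1l: "\<And>y. (fl has_derivative (\<lambda>v. gradfl y \<bullet> v)) (at y)" "continuous_on UNIV gradfl"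
    and AS2: "L \<ge> 0" "\<And>y z. norm (gradfm y - gradfm z) \<le> L * norm (y - z)"
             "\<And>y z. norm (gradfl y - gradfl z) \<le> L * norm (y - z)"
    \<comment> \<open>transfer operators: full rank, omega P = R^T, lower level coarser\<close>
    and dims: "CARD('m) \<le> CARD('n)"
    and fullrank: "rank R = min CARD('m) CARD('n)"
    and omega: "\<omega> > 0" "\<omega> *\<^sub>R P = transpose R"
    \<comment> \<open>current level-l iterate and gradient of h_l there\<close>
    and hl_grad: "(hl has_derivative (\<lambda>v. g \<bullet> v)) (at xl)"
    and alpha: "\<alpha> \<ge> 1"
    \<comment> \<open>the lower-level model h_(l-1) and its gradients at the lower iterates\<close>
    and x0: "x 0 = R *v xl"
    and gm: "\<And>k. ((\<lambda>y. fm y + (R *v g - gradfm (x 0)) \<bullet> (y - x 0))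
                      has_derivative (\<lambda>v. gm k \<bullet> v)) (at (x k))"
    \<comment> \<open>il \<ge> 1 completed lower-level iterations, returning x il\<close>
    and il: "il \<ge> 1" "il \<le> imax"
    and steps: "\<And>k. k < il \<Longrightarrow> x (Suc k) = x k + s k"
    and notstop: "\<And>k. k < il \<Longrightarrow> norm (gm k) > eps \<and> k < imax"
    and inTR: "\<And>k. k \<le> il \<Longrightarrow> norm (P *v (x k - x 0)) \<le> \<alpha> * norm Dl"
    \<comment> \<open>the recursive step at level l\<close>
    and sl: "sl = P *v (x il - x 0)"
  shows "\<bar>g \<bullet> sl - (1 / \<omega>) * (\<Sum>k<il. gm k \<bullet> s k)\<bar>
           \<le> 2 * real imax * L * (\<alpha> * norm Dl)^2 / (\<omega> * (sigma_min P)^2)"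
proof -
  define \<sigma> where "\<sigma> = sigma_min P"
  have "\<omega> \<noteq> 0"
    using omega(1) by simp
  then have injP: "inj ((*v) P)"
    using scaled_transpose_injective omega(2) fullrank dims by (metis min_absorb1)
  have \<sigma>: "\<sigma> > 0" "\<And>v. \<sigma> * norm v \<le> norm (P *v v)"
    unfolding \<sigma>_def using sigma_min_injective_bounds[OF dims injP] by auto
  have gmk: "gm k = gradfm (x k) + (R *v g - gradfm (x 0))" for k
    using gradient_add_inner_const[OF AS1m(1) gm] .
  have ball: "norm (x k - x 0) \<le> \<alpha> * norm Dl / \<sigma>" if "k \<le> il" for k
    using \<sigma>(2)[of "x k - x 0"] inTR[OF that] \<sigma>(1) by (simp add: field_simps)
  have "g \<bullet> sl - (1 / \<omega>) * (\<Sum>k<il. gm k \<bullet> s k)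
      = (gm 0 \<bullet> (x il - x 0) - (\<Sum>k<il. gm k \<bullet> s k)) / \<omega>"
    using gmk[of 0]
    by (simp add: sl inner_scaled_transpose[OF \<open>\<omega> \<noteq> 0\<close> omega(2)] diff_divide_distrib)
  also have "\<dots> = (\<Sum>k<il. (gradfm (x 0) - gradfm (x k)) \<bullet> (x (Suc k) - x k)) / \<omega>"
    by (simp add: inner_telescope_diff[of il x s, OF steps] gmk)
  also have "\<bar>\<dots>\<bar> \<le> real il * (2 * L * (\<alpha> * norm Dl / \<sigma>)^2) / \<omega>"
    using sum_inner_gradient_drift_bound[of gradfm L il x, OF AS2(2,1) ball] omega(1)
    by (simp add: divide_right_mono)
  also have "\<dots> = real il * (2 * L * (\<alpha> * norm Dl)^2 / (\<omega> * \<sigma>^2))"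
    by (simp add: power_divide)
  also have "\<dots> \<le> real imax * (2 * L * (\<alpha> * norm Dl)^2 / (\<omega> * \<sigma>^2))"
    using il(2) AS2(1) omega(1) by (intro mult_right_mono) auto
  finally show ?thesis
    by (simp add: \<sigma>_def mult_ac)
qed

end
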